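(* An allocation algorithm $A$ is truthful without money and with verification for CAs with (unknown) $k$-minded bidders if and only if $A$ is $k$-set monotone, where $A$ is called $k$-set monotone if for every bidder $i$, every $\mathbf b_{-i}$ and every $a=(z,\mathcal T)\in D_i$: if $A_i(a,\mathbf b_{-i})=T$, then for every $c=(w,\mathcal W)\in D_i$ such that $\sigma(T\mid c)=W$ and $w(W)\ge z(T)$, we have $w(A_i(c,\mathbf b_{-i}))\ge w(W)$.
   Context: Combinatorial auction setting: a set $\mathsf U$ of $m$ goods and $n$ bidders. The true type of bidder $i$ is $t_i=(v_i,\mathcal S_i)$, where $\mathcal S_i$ is a private collection of $k$ nonempty subsets of $\mathsf U$ and $v_i:\mathcal S_i\to\mathbb R_{\ge0}$ is private, extended to all $S\subseteq\mathsf U$ by $v_i(S)=\max\{v_i(S'):S'\in\mathcal S_i,\ S'\subseteq S\}$ ($0$ if none; $v_i(\emptyset)=0$). A declaration of bidder $i$ is any pair $c=(w,\mathcal W)$ of the same form, extended the same way; $D_i$ is the set of all declarations of $i$. For a declaration $c=(w,\mathcal W)$ and $T\subseteq\mathsf U$, $\sigma(T\mid c)$ denotes an inclusion-maximal set in $\mathcal W\cup\{\emptyset\}$ contained in $T$ with $w(\sigma(T\mid c))=w(T)$. An allocation algorithm $A$ maps declaration profiles $\mathbf b$ to feasible allocations (each good allocated at most as many times as its supply) and is exact: $A_i(\mathbf b)\in\mathcal W_i\cup\{\emptyset\}$ where $b_i=(w_i,\mathcal W_i)$. Verification: bidder $i$ with true type $t_i$, facing $\mathbf b_{-i}$, may declare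 $b_i=(z,\mathcal T)$ only if $z(A_i(b_i,\mathbf b_{-i}))\le v_i(A_i(b_i,\mathbf b_{-i}))$. $A$ is truthful without money and with verification if for all $i$, $\mathbf b_{-i}$, true types $t_i\in D_i$ and declarations $b_i\in D_i$ permitted by verification, $v_i(A_i(t_i,\mathbf b_{-i}))\ge v_i(A_i(b_i,\mathbf b_{-i}))$. *)

theory Defs
  imports Complex_Main
begin

text \<open>A declaration (or type) is a pair (w, W): W is a collection of sets of goods,
  w gives the value of each set in W (normalised to 0 outside W).\<close>
type_synonym 'g decl = "('g set \<Rightarrow> real) \<times> 'g set set"

definition decls :: "'g set \<Rightarrow> nat \<Rightarrow> 'g decl set" where
  "decls U k = {(w, W). finite W \<and> card W = k \<and>
                        (\<forall>S\<in>W. S \<noteq> {} \<and> S \<subseteq> U) \<and>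
                        (\<forall>S\<in>W. w S \<ge> 0) \<and> (\<forall>S. S \<notin> W \<longrightarrow> w S = 0)}"

definition ext_val :: "'g decl \<Rightarrow> 'g set \<Rightarrow> real" where
  "ext_val c S = Max (insert 0 (fst c ` {S' \<in> snd c. S' \<subseteq> S}))"

definition is_sigma :: "'g decl \<Rightarrow> 'g set \<Rightarrow> 'g set \<Rightarrow> bool" where
  "is_sigma c T X \<longleftrightarrow> X \<in> insert {} (snd c) \<and> X \<subseteq> T \<and> ext_val c X = ext_val c T \<and>
     \<not> (\<exists>Y \<in> insert {} (snd c). X \<subset> Y \<and> Y \<subseteq> T \<and> ext_val c Y = ext_val c T)"

definition sigma :: "'g decl \<Rightarrow> 'g set \<Rightarrow> 'g set" where
  "sigma c T = (SOME X. is_sigma c T X)"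

definition valid_profile :: "'g set \<Rightarrow> nat \<Rightarrow> nat \<Rightarrow> (nat \<Rightarrow> 'g decl) \<Rightarrow> bool" where
  "valid_profile U k n b \<longleftrightarrow> (\<forall>i<n. b i \<in> decls U k)"

definition allocation_algorithm ::
  "'g set \<Rightarrow> ('g \<Rightarrow> nat) \<Rightarrow> nat \<Rightarrow> nat \<Rightarrow> ((nat \<Rightarrow> 'g decl) \<Rightarrow> nat \<Rightarrow> 'g set) \<Rightarrow> bool" where
  "allocation_algorithm U s k n A \<longleftrightarrow>
     (\<forall>b. valid_profile U k n b \<longrightarrow>
        (\<forall>i<n. A b i \<in> insert {} (snd (b i))) \<and>
        (\<forall>g\<in>U. card {i. i < n \<and> g \<in> A b i} \<le> s g))"

definition truthful_verif ::
  "'g set \<Rightarrow> nat \<Rightarrow> nat \<Rightarrow> ((nat \<Rightarrow> 'g decl) \<Rightarrow> nat \<Rightarrow> 'g set) \<Rightarrow> bool" where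
  "truthful_verif U k n A \<longleftrightarrow>
     (\<forall>i<n. \<forall>b. valid_profile U k n b \<longrightarrow>
        (\<forall>t \<in> decls U k. \<forall>bi \<in> decls U k.
           ext_val bi (A (b(i := bi)) i) \<le> ext_val t (A (b(i := bi)) i) \<longrightarrow>
           ext_val t (A (b(i := t)) i) \<ge> ext_val t (A (b(i := bi)) i)))"

definition k_set_monotone ::
  "'g set \<Rightarrow> nat \<Rightarrow> nat \<Rightarrow> ((nat \<Rightarrow> 'g decl) \<Rightarrow> nat \<Rightarrow> 'g set) \<Rightarrow> bool" where
  "k_set_monotone U k n A \<longleftrightarrow>
     (\<forall>i<n. \<forall>b. valid_profile U k n b \<longrightarrow>
        (\<forall>a \<in> decls U k. \<forall>T. A (b(i := a)) i = T \<longrightarrow>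
          (\<forall>c \<in> decls U k. \<forall>W. sigma c T = W \<and> ext_val c W \<ge> ext_val a T \<longrightarrow>
             ext_val c (A (b(i := c)) i) \<ge> ext_val c W)))"

end

theory Submission
  imports Defs
begin

text \<open>Since w(\<sigma>(T | c)) = w(T), the premise w(W) \<ge> z(T) of k-set monotonicity at
  T = A_i(a, b_-i) is exactly the verification condition for a bidder of true type c who
  declares a, and its conclusion is exactly the truthfulness inequality for that bidder.\<close>

lemma ext_val_mono:
  assumes "finite (snd c)" "X \<subseteq> T"
  shows "ext_val c X \<le> ext_val c T"
  unfolding ext_val_def by (rule Max_mono) (use assms in auto)

lemma ext_val_ge:
  assumes "finite (snd c)" "S \<in> snd c" "S \<subseteq> X"
  shows "fst c S \<le> ext_val c X"
  unfolding ext_val_def using assms by (intro Max_ge) auto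

lemma ext_val_nonneg:
  assumes "finite (snd c)"
  shows "0 \<le> ext_val c X"
  unfolding ext_val_def using assms by (intro Max_ge) auto

lemma ext_val_attained:
  assumes fin: "finite (snd c)"
  obtains X where "X \<in> insert {} (snd c)" "X \<subseteq> T" "ext_val c X = ext_val c T"
proof -
  have "ext_val c T \<in> insert 0 (fst c ` {S \<in> snd c. S \<subseteq> T})"
    unfolding ext_val_def by (rule Max_in) (use fin in auto)
  then show thesis
  proof
    assume zero: "ext_val c T = 0"
    have "ext_val c {} \<le> ext_val c T" by (rule ext_val_mono[OF fin]) auto
    with zero ext_val_nonneg[OF fin, of "{}"] have "ext_val c {} = ext_val c T" by linarith
    then show thesis using that[of "{}"] by blast
  next
    assume "ext_val c T \<in> fst c ` {S \<in> snd c. S \<subseteq> T}"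
    then obtain S where S: "S \<in> snd c" "S \<subseteq> T" "ext_val c T = fst c S" by auto
    have "ext_val c S \<le> ext_val c T" by (rule ext_val_mono[OF fin S(2)])
    moreover have "fst c S \<le> ext_val c S" by (rule ext_val_ge[OF fin S(1)]) auto
    ultimately have "ext_val c S = ext_val c T" using S(3) by linarith
    with S(1,2) show thesis using that[of S] by blast
  qed
qed

lemma is_sigma_exists:
  assumes fin: "finite (snd c)"
  shows "\<exists>X. is_sigma c T X"
proof -
  define C where "C = {X \<in> insert {} (snd c). X \<subseteq> T \<and> ext_val c X = ext_val c T}"
  obtain X0 where "X0 \<in> insert {} (snd c)" "X0 \<subseteq> T" "ext_val c X0 = ext_val c T"
    using ext_val_attained[OF fin] .
  then have "C \<noteq> {}" unfolding C_def by blast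
  moreover have "finite C" unfolding C_def using fin by auto
  ultimately obtain X where "X \<in> C" "\<forall>Y\<in>C. X \<le> Y \<longrightarrow> X = Y"
    using finite_has_maximal by blast
  then have "is_sigma c T X" unfolding is_sigma_def C_def by auto
  then show ?thesis ..
qed

lemma ext_val_sigma:
  assumes "finite (snd c)"
  shows "ext_val c (sigma c T) = ext_val c T"
proof -
  have "is_sigma c T (sigma c T)"
    unfolding sigma_def using is_sigma_exists[OF assms] by (rule someI_ex)
  then show ?thesis unfolding is_sigma_def by blast
qed

lemma finite_decl_sets: "c \<in> decls U k \<Longrightarrow> finite (snd c)"
  unfolding decls_def by auto

lemma k_set_monotone_iff:
  "k_set_monotone U k n A \<longleftrightarrow>
     (\<forall>i<n. \<forall>b. valid_profile U k n b \<longrightarrow>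
        (\<forall>c \<in> decls U k. \<forall>a \<in> decls U k.
           ext_val a (A (b(i := a)) i) \<le> ext_val c (A (b(i := a)) i) \<longrightarrow>
           ext_val c (A (b(i := a)) i) \<le> ext_val c (A (b(i := c)) i)))"
  unfolding k_set_monotone_def by (simp add: ext_val_sigma finite_decl_sets) blast

theorem theorem2:
  fixes U :: "'g set" and s :: "'g \<Rightarrow> nat" and k n :: nat
    and A :: "(nat \<Rightarrow> 'g decl) \<Rightarrow> nat \<Rightarrow> 'g set"
  assumes "finite U"
    and "allocation_algorithm U s k n A"
  shows "truthful_verif U k n A \<longleftrightarrow> k_set_monotone U k n A"
  unfolding truthful_verif_def k_set_monotone_iff by (rule refl)

end
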